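(* Let $z_\delta^{(n)}=h(v_\delta^{(n)})$. There exists a constant $C_{15}>0$ independent of $n\in\mathbb{N}$ and $\delta>0$ such that $$\int_0^1|v_\delta^{(n)}(t)|^2dx\le C_{15},\quad \int_0^1|z_\delta^{(n)}(t)|^2dx\le C_{15}\quad(0\le t\le T),$$ $$\int_0^T\!\!\int_0^1|\widetilde v_\delta^{(n)}|^2dxdt\le C_{15},\quad \int_0^T\!\!\int_0^1|\widetilde z_\delta^{(n)}|^2dxdt\le C_{15},$$ where for $w\in\{v,z\}$, $\widetilde w_\delta^{(n)}(t,x)=0$ for $0\le x<\Delta x^{(n)}$ and $\widetilde w_\delta^{(n)}(t,x)=\big(w_\delta^{(n)}(t,x)-w_\delta^{(n)}(t,x-\Delta x^{(n)})\big)/\Delta x^{(n)}$ for $\Delta x^{(n)}\le x\le1$.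
   Context: $Q(T)=(0,T)\times(0,1)$, $H=L^2(0,1)$, $X=H^1(0,1)$, $T>0$. Assume $h\in C^2(\mathbb{R})$ with $\delta_h\le h'\le C_h$, $|h''|\le C_h$; $b\in C^2(\mathbb{R})$ with $\delta_b\le b\le C_b$, $|b'|,|b''|\le C_b$ (positive constants); $p\in L^2(0,T;H)$; $v_0\in H$. Extend $p$ by zero to $\mathbb{R}^2$ and let $\rho_\delta=J^{(2)}_\delta\ast p$ ($J^{(2)}_\delta$ a standard mollifier on $\mathbb{R}^2$). For $n\in\mathbb{N}$ let $\Delta x^{(n)}=1/n$, $\chi_i^{(n)}$ the characteristic function of $[(i-1)\Delta x^{(n)},i\Delta x^{(n)})$, $\rho_{\delta,i}^{(n)}(t)=\frac1{\Delta x^{(n)}}\int_{(i-1)\Delta x^{(n)}}^{i\Delta x^{(n)}}\rho_\delta(t,\xi)d\xi$, $v_{0,i}^{(n)}=\frac1{\Delta x^{(n)}}\int_{(i-1)\Delta x^{(n)}}^{i\Delta x^{(n)}}v_0(\xi)d\xi$. Let $(v_{\delta,1}^{(n)},\dots,v_{\delta,n}^{(n)})$ be the unique $C^1$ solution of (writing $v_i=v_{\delta,i}^{(n)}$, $\rho_i=\rho_{\delta,i}^{(n)}$, $\Delta x=\Delta x^{(n)}$, $a_i=\frac{v_{i+1}-v_i}{\Delta x}+b(\frac{v_i+v_{i+1}}2)\rho_i$, $i=1,\dots,n-1$): $h'(v_1)v_1'=a_1/\Delta x$; $h'(v_i)v_i'=(a_i-a_{i-1})/\Delta x$ for $2\le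 i\le n-1$; $h'(v_n)v_n'=-a_{n-1}/\Delta x$; $v_i(0)=v_{0,i}^{(n)}$. Set $v_\delta^{(n)}(t,x)=\sum_{i=1}^n\chi_i^{(n)}(x)v_{\delta,i}^{(n)}(t)$ on $Q(T)$. *)

theory Defs
  imports "HOL-Analysis.Analysis"
begin

definition QT :: "real \<Rightarrow> (real \<times> real) set" where
  "QT T = {0<..<T} \<times> {0<..<1}"

definition bump2 :: "real \<times> real \<Rightarrow> real" where
  "bump2 z = (if norm z < 1 then exp (1 / ((norm z)\<^sup>2 - 1)) else 0)"

definition std_moll :: "real \<times> real \<Rightarrow> real" where
  "std_moll z = bump2 z / (\<integral> w. bump2 w \<partial>lborel)"

definition moll :: "real \<Rightarrow> real \<times> real \<Rightarrow> real" where
  "moll \<delta> z = std_moll ((1 / \<delta>) *\<^sub>R z) / \<delta>\<^sup>2"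

definition rho :: "(real \<times> real \<Rightarrow> real) \<Rightarrow> real \<Rightarrow> real \<Rightarrow> real \<times> real \<Rightarrow> real" where
  "rho p T \<delta> z = (\<integral> y. moll \<delta> (z - y) * (indicator (QT T) y * p y) \<partial>lborel)"

definition dx :: "nat \<Rightarrow> real" where
  "dx n = 1 / real n"

definition cell :: "nat \<Rightarrow> nat \<Rightarrow> real set" where
  "cell n i = {real (i - 1) * dx n ..< real i * dx n}"

definition rho_i :: "(real \<times> real \<Rightarrow> real) \<Rightarrow> real \<Rightarrow> real \<Rightarrow> nat \<Rightarrow> nat \<Rightarrow> real \<Rightarrow> real" where
  "rho_i p T \<delta> n i t = (1 / dx n) * set_lebesgue_integral lborel (cell n i) (\<lambda>\<xi>. rho p T \<delta> (t, \<xi>))"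

definition v0_i :: "(real \<Rightarrow> real) \<Rightarrow> nat \<Rightarrow> nat \<Rightarrow> real" where
  "v0_i v0 n i = (1 / dx n) * set_lebesgue_integral lborel (cell n i) v0"

definition flux :: "(real \<Rightarrow> real) \<Rightarrow> (real \<times> real \<Rightarrow> real) \<Rightarrow> real \<Rightarrow> real \<Rightarrow> nat
    \<Rightarrow> (nat \<Rightarrow> real \<Rightarrow> real) \<Rightarrow> nat \<Rightarrow> real \<Rightarrow> real" where
  "flux b p T \<delta> n v i t =
     (v (Suc i) t - v i t) / dx n + b ((v i t + v (Suc i) t) / 2) * rho_i p T \<delta> n i t"

definition scheme_sol :: "(real \<Rightarrow> real) \<Rightarrow> (real \<Rightarrow> real) \<Rightarrow> (real \<times> real \<Rightarrow> real)
    \<Rightarrow> (real \<Rightarrow> real) \<Rightarrow> real \<Rightarrow> real \<Rightarrow> nat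
    \<Rightarrow> (nat \<Rightarrow> real \<Rightarrow> real) \<Rightarrow> (nat \<Rightarrow> real \<Rightarrow> real) \<Rightarrow> bool" where
  "scheme_sol h' b p v0 T \<delta> n v v' \<longleftrightarrow>
     (\<forall>i\<in>{1..n}.
        (\<forall>t\<in>{0..T}. (v i has_real_derivative v' i t) (at t within {0..T})) \<and>
        continuous_on {0..T} (v' i) \<and>
        v i 0 = v0_i v0 n i) \<and>
     (\<forall>t\<in>{0..T}.
        h' (v 1 t) * v' 1 t = flux b p T \<delta> n v 1 t / dx n \<and>
        (\<forall>i. 2 \<le> i \<and> i \<le> n - 1 \<longrightarrow>
           h' (v i t) * v' i t = (flux b p T \<delta> n v i t - flux b p T \<delta> n v (i - 1) t) / dx n) \<and>
        h' (v n t) * v' n t = - flux b p T \<delta> n v (n - 1) t / dx n)"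

definition step_fun :: "nat \<Rightarrow> (nat \<Rightarrow> real \<Rightarrow> real) \<Rightarrow> real \<Rightarrow> real \<Rightarrow> real" where
  "step_fun n w t x = (\<Sum>i\<in>{1..n}. indicator (cell n i) x * w i t)"

definition diffq :: "nat \<Rightarrow> (real \<Rightarrow> real \<Rightarrow> real) \<Rightarrow> real \<Rightarrow> real \<Rightarrow> real" where
  "diffq n W t x = (if x < dx n then 0 else (W t x - W t (x - dx n)) / dx n)"

end

theory Submission
  imports Defs
begin

text \<open>
  The discrete energy N(t) = dx * sum_i h(v_i(t))^2 is the quantity to control. Multiplying the
  i-th equation by h(v_i) and summing by parts (the boundary fluxes vanish) gives
  N' = -2 sum_i a_i (h(v_(i+1)) - h(v_i)). Since h is strongly monotone and Lipschitz, Young's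
  inequality turns this into N' + delta_h |D v|^2 <= K |rho|^2 with the discrete gradient D v
  and the cell averages rho_i of the mollified forcing. Because the mollifier has unit mass,
  the cell averages of rho_delta are bounded in L2(Q(T)) by p, uniformly in n and delta, and
  the cell averages of v_0 are bounded in L2 by v_0. Integrating in time bounds N(t) and
  the time integral of |D v|^2; the bounds for v and for the difference quotients of
  z = h(v) then follow from delta_h <= h' <= C_h.
\<close>

lemma weighted_mean_square_le:
  fixes f g :: "'a \<Rightarrow> real"
  assumes [measurable]: "f \<in> borel_measurable M" "g \<in> borel_measurable M"
    and f_nonneg: "\<And>x. 0 \<le> f x" and f_mass: "(\<integral>\<^sup>+x. f x \<partial>M) \<le> 1"
  shows "ennreal ((\<integral>x. f x * g x \<partial>M)\<^sup>2) \<le> (\<integral>\<^sup>+x. f x * (g x)\<^sup>2 \<partial>M)"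
proof (cases "integrable M (\<lambda>x. f x * g x) \<and> (\<integral>\<^sup>+x. f x * (g x)\<^sup>2 \<partial>M) < \<infinity>")
  case False
  then show ?thesis
    by (cases "integrable M (\<lambda>x. f x * g x)") (auto simp: not_integrable_integral_eq less_top[symmetric])
next
  case True
  then have int_fg: "integrable M (\<lambda>x. f x * g x)" and fin: "(\<integral>\<^sup>+x. f x * (g x)\<^sup>2 \<partial>M) < \<infinity>"
    by auto
  have int_fg2: "integrable M (\<lambda>x. f x * (g x)\<^sup>2)"
    using fin f_nonneg by (intro integrableI_nn_integral_finite[where x="enn2real (\<integral>\<^sup>+x. f x * (g x)\<^sup>2 \<partial>M)"]) auto
  have int_f: "integrable M f"
    using f_mass f_nonneg by (intro integrableI_nn_integral_finite[where x="enn2real (\<integral>\<^sup>+x. f x \<partial>M)"])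
      (auto simp: top_unique less_top[symmetric] ennreal_enn2real_if intro: le_less_trans[OF f_mass])
  define m where "m = (\<integral>x. f x * g x \<partial>M)"
  define a where "a = (\<integral>x. f x \<partial>M)"
  have "ennreal a = (\<integral>\<^sup>+x. f x \<partial>M)"
    unfolding a_def using int_f f_nonneg by (simp add: nn_integral_eq_integral)
  then have a_le_1: "a \<le> 1" using f_mass by (metis ennreal_le_1)
  \<comment> \<open>expand the variance of g about m with respect to the weight f\<close>
  have "0 \<le> (\<integral>x. f x * (g x - m)\<^sup>2 \<partial>M)" using f_nonneg by simp
  also have "\<dots> = (\<integral>x. f x * (g x)\<^sup>2 - 2 * m * (f x * g x) + m\<^sup>2 * f x \<partial>M)"
    by (rule Bochner_Integration.integral_cong) (auto simp: power2_eq_square algebra_simps)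
  also have "\<dots> = (\<integral>x. f x * (g x)\<^sup>2 \<partial>M) - 2 * m * m + m\<^sup>2 * a"
    using int_fg int_fg2 int_f unfolding m_def a_def by simp
  finally have "m\<^sup>2 * (2 - a) \<le> (\<integral>x. f x * (g x)\<^sup>2 \<partial>M)" by (simp add: power2_eq_square algebra_simps)
  moreover have "m\<^sup>2 \<le> m\<^sup>2 * (2 - a)" using a_le_1 by (simp add: mult_le_cancel_left1)
  ultimately have "ennreal (m\<^sup>2) \<le> ennreal (\<integral>x. f x * (g x)\<^sup>2 \<partial>M)" by (intro ennreal_leI) linarith
  also have "\<dots> = (\<integral>\<^sup>+x. f x * (g x)\<^sup>2 \<partial>M)" using int_fg2 f_nonneg by (simp add: nn_integral_eq_integral)
  finally show ?thesis unfolding m_def .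
qed

lemma bump2_measurable [measurable]: "bump2 \<in> borel_measurable borel"
  unfolding bump2_def by measurable

lemma bump2_nonneg: "0 \<le> bump2 z"
  unfolding bump2_def by simp

lemma moll_measurable [measurable]: "moll \<delta> \<in> borel_measurable borel"
  unfolding moll_def std_moll_def by measurable

lemma moll_nonneg: "0 \<le> moll \<delta> z"
  unfolding moll_def std_moll_def by (simp add: integral_nonneg_AE bump2_nonneg)

lemma moll_minus: "moll \<delta> (- z) = moll \<delta> z"
  unfolding moll_def std_moll_def bump2_def by simp

lemma nn_integral_moll_le_1:
  assumes "\<delta> > 0"
  shows "(\<integral>\<^sup>+y. ennreal (moll \<delta> (z - y)) \<partial>lborel) \<le> 1"
proof -
  define c where "c = (\<integral>w. bump2 w \<partial>lborel)"
  have moll_scaled: "moll \<delta> (\<delta> *\<^sub>R x) * \<delta>\<^sup>2 = bump2 x / c" for x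
    using assms unfolding moll_def std_moll_def c_def by simp
  have "(\<integral>\<^sup>+y. ennreal (moll \<delta> (z - y)) \<partial>lborel)
      = ennreal (\<bar>-\<delta>\<bar>^DIM(real \<times> real)) * (\<integral>\<^sup>+x. ennreal (moll \<delta> (z - (z + (-\<delta>) *\<^sub>R x))) \<partial>lborel)"
    using assms
    by (subst lborel_affine[of "-\<delta>" z]) (simp_all add: nn_integral_density nn_integral_distr nn_integral_cmult)
  also have "\<dots> = (\<integral>\<^sup>+x. ennreal (moll \<delta> (\<delta> *\<^sub>R x) * \<delta>\<^sup>2) \<partial>lborel)"
    using assms by (simp add: nn_integral_cmult[symmetric] ennreal_mult' moll_nonneg mult.commute power2_eq_square)
  also have "\<dots> = (\<integral>\<^sup>+x. ennreal (bump2 x / c) \<partial>lborel)"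
    by (simp only: moll_scaled)
  also have "\<dots> \<le> 1"
  proof (cases "integrable lborel bump2 \<and> c \<noteq> 0")
    case True
    then have "c > 0" unfolding c_def by (simp add: integral_nonneg_AE bump2_nonneg order.not_eq_order_implies_strict)
    have "(\<integral>\<^sup>+x. ennreal (bump2 x / c) \<partial>lborel) = ennreal (\<integral>x. bump2 x / c \<partial>lborel)"
      using True \<open>c > 0\<close> by (intro nn_integral_eq_integral) (auto simp: bump2_nonneg)
    also have "\<dots> = 1" using \<open>c > 0\<close> unfolding c_def by simp
    finally show ?thesis by simp
  next
    case False
    then have "c = 0" unfolding c_def using not_integrable_integral_eq by blast
    then show ?thesis by simp
  qed
  finally show ?thesis .
qed

lemma nn_integral_moll_le_1':
  assumes "\<delta> > 0"
  shows "(\<integral>\<^sup>+z. ennreal (moll \<delta> (z - y)) \<partial>lborel) \<le> 1"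
  using nn_integral_moll_le_1[OF assms, of y] moll_minus[of \<delta> "_ - y"] by simp

lemma QT_measurable [measurable]: "QT T \<in> sets borel"
  unfolding QT_def by (intro borel_open open_Times) auto

lemma rho_measurable [measurable]:
  assumes [measurable]: "p \<in> borel_measurable borel"
  shows "rho p T \<delta> \<in> borel_measurable borel"
proof -
  have "(\<lambda>z. \<integral>y. moll \<delta> (z - y) * (indicator (QT T) y * p y) \<partial>lborel) \<in> borel_measurable lborel"
    by (rule lborel.borel_measurable_lebesgue_integral) measurable
  then show ?thesis unfolding rho_def[abs_def] by simp
qed

text \<open>Young's inequality for a kernel of mass at most 1 in either variable: Cauchy-Schwarz
  against the weight y \<mapsto> moll \<delta> (z - y) at each point z, then Tonelli.\<close>
lemma nn_integral_rho_slices_le: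
  assumes [measurable]: "p \<in> borel_measurable borel" and "\<delta> > 0"
    and "set_integrable lborel (QT T) (\<lambda>z. (p z)\<^sup>2)"
  shows "(\<integral>\<^sup>+t. \<integral>\<^sup>+\<xi>. ennreal ((rho p T \<delta> (t, \<xi>))\<^sup>2) \<partial>lborel \<partial>lborel)
    \<le> ennreal (set_lebesgue_integral lborel (QT T) (\<lambda>z. (p z)\<^sup>2))"
proof -
  define q where "q y = indicator (QT T) y * p y" for y
  have [measurable]: "q \<in> borel_measurable borel" unfolding q_def by measurable
  have "(\<integral>\<^sup>+t. \<integral>\<^sup>+\<xi>. ennreal ((rho p T \<delta> (t, \<xi>))\<^sup>2) \<partial>lborel \<partial>lborel)
      = (\<integral>\<^sup>+z. ennreal ((rho p T \<delta> z)\<^sup>2) \<partial>lborel)"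
    using lborel.nn_integral_fst[of "\<lambda>z. ennreal ((rho p T \<delta> z)\<^sup>2)" lborel]
    by (simp add: lborel_prod)
  also have "\<dots> \<le> (\<integral>\<^sup>+z. \<integral>\<^sup>+y. ennreal (moll \<delta> (z - y) * (q y)\<^sup>2) \<partial>lborel \<partial>lborel)"
  proof (rule nn_integral_mono)
    fix z
    show "ennreal ((rho p T \<delta> z)\<^sup>2) \<le> (\<integral>\<^sup>+y. ennreal (moll \<delta> (z - y) * (q y)\<^sup>2) \<partial>lborel)"
      unfolding rho_def q_def
      by (rule weighted_mean_square_le) (use moll_nonneg nn_integral_moll_le_1[OF \<open>\<delta> > 0\<close>] in auto)
  qed
  also have "\<dots> = (\<integral>\<^sup>+y. \<integral>\<^sup>+z. ennreal (moll \<delta> (z - y) * (q y)\<^sup>2) \<partial>lborel \<partial>lborel)"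
    by (rule lborel_pair.Fubini'[symmetric]) measurable
  also have "\<dots> = (\<integral>\<^sup>+y. (\<integral>\<^sup>+z. ennreal (moll \<delta> (z - y)) \<partial>lborel) * ennreal ((q y)\<^sup>2) \<partial>lborel)"
    by (rule nn_integral_cong) (simp add: ennreal_mult moll_nonneg nn_integral_multc)
  also have "\<dots> \<le> (\<integral>\<^sup>+y. ennreal ((q y)\<^sup>2) \<partial>lborel)"
    using mult_right_mono[OF nn_integral_moll_le_1'[OF \<open>\<delta> > 0\<close>]] by (intro nn_integral_mono) simp
  also have "\<dots> = (\<integral>\<^sup>+y. ennreal (indicator (QT T) y *\<^sub>R (p y)\<^sup>2) \<partial>lborel)"
    by (rule nn_integral_cong) (simp add: q_def indicator_def power2_eq_square)
  also have "\<dots> = ennreal (set_lebesgue_integral lborel (QT T) (\<lambda>z. (p z)\<^sup>2))"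
    using assms(3) unfolding set_integrable_def set_lebesgue_integral_def
    by (intro nn_integral_eq_integral) auto
  finally show ?thesis .
qed

lemma cell_measurable [measurable]: "cell n i \<in> sets borel"
  unfolding cell_def by simp

lemma dx_pos: "n \<ge> 1 \<Longrightarrow> dx n > 0"
  unfolding dx_def by simp

lemma real_mult_dx: "n \<ge> 1 \<Longrightarrow> real n * dx n = 1"
  unfolding dx_def by simp

lemma mem_cell_iff:
  assumes "n \<ge> 1" "i \<ge> 1"
  shows "x \<in> cell n i \<longleftrightarrow> real i - 1 \<le> x * real n \<and> x * real n < real i"
proof -
  have "real (i - 1) = real i - 1" using assms by (simp add: of_nat_diff)
  then show ?thesis using assms unfolding cell_def dx_def by (simp add: field_simps)
qed

lemma cell_unique:
  assumes "n \<ge> 1" "i \<ge> 1" "j \<ge> 1" "x \<in> cell n i" "x \<in> cell n j"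
  shows "i = j"
  using assms mem_cell_iff[of n i x] mem_cell_iff[of n j x] by linarith

lemma cell_subset:
  assumes "i \<in> {1..n}"
  shows "cell n i \<subseteq> {0..<1}"
proof
  fix x assume x: "x \<in> cell n i"
  have "real n > 0" "1 \<le> real i" "real i \<le> real n" using assms by auto
  moreover have "real i - 1 \<le> x * real n" "x * real n < real i"
    using x mem_cell_iff[of n i x] assms by auto
  ultimately have "0 \<le> x * real n" "x * real n < 1 * real n" by linarith+
  with \<open>real n > 0\<close> show "x \<in> {0..<1}"
    by (auto simp only: zero_le_mult_iff mult_less_cancel_right atLeastLessThan_iff)
qed

lemma ex_cell:
  assumes "n \<ge> 1" "x \<in> {0..<1}"
  shows "\<exists>i\<in>{1..n}. x \<in> cell n i"
proof -
  define k where "k = nat \<lfloor>x * real n\<rfloor>"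
  have "0 \<le> x * real n" "x * real n < real n" using assms by auto
  then have "real k \<le> x * real n" "x * real n < real k + 1" "k < n"
    unfolding k_def by linarith+
  then show ?thesis using mem_cell_iff[OF assms(1), of "Suc k"] by force
qed

lemma sum_indicator_cell:
  assumes "i \<in> {1..n}" "x \<in> cell n i"
  shows "(\<Sum>j\<in>{1..n}. indicator (cell n j) x * c j) = (c i :: real)"
proof -
  have "(\<Sum>j\<in>{1..n}. indicator (cell n j) x * c j) = (\<Sum>j\<in>{1..n}. if j = i then c i else 0)"
    by (rule sum.cong) (use cell_unique[of n i j x for j] assms in \<open>auto simp: indicator_def\<close>)
  then show ?thesis using assms(1) by simp
qed

lemma sum_indicator_cells_le: "(\<Sum>j\<in>{1..n}. indicator (cell n j) x) \<le> (indicator {0..1} x :: real)"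
proof (cases "\<exists>i\<in>{1..n}. x \<in> cell n i")
  case True
  then obtain i where i: "i \<in> {1..n}" "x \<in> cell n i" by blast
  then show ?thesis
    using sum_indicator_cell[OF i, of "\<lambda>_. 1"] cell_subset[OF i(1)] by auto
qed (auto intro: sum.neutral)

lemma emeasure_cell:
  assumes "n \<ge> 1" "i \<ge> 1"
  shows "emeasure lborel (cell n i) = ennreal (dx n)"
proof -
  have "real (i - 1) = real i - 1" using assms by (simp add: of_nat_diff)
  then show ?thesis
    using dx_pos[OF assms(1)] unfolding cell_def by (simp add: algebra_simps)
qed

lemma measure_cell: "n \<ge> 1 \<Longrightarrow> i \<ge> 1 \<Longrightarrow> measure lborel (cell n i) = dx n"
  by (simp add: measure_def emeasure_cell dx_pos less_imp_le)

definition grid_l2_sq :: "nat \<Rightarrow> (nat \<Rightarrow> real) \<Rightarrow> real" where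
  "grid_l2_sq n f = dx n * (\<Sum>i\<in>{1..n}. (f i)\<^sup>2)"

definition grid_diff_l2_sq :: "nat \<Rightarrow> (nat \<Rightarrow> real) \<Rightarrow> real" where
  "grid_diff_l2_sq n f = dx n * (\<Sum>i\<in>{1..<n}. ((f (Suc i) - f i) / dx n)\<^sup>2)"

lemma grid_l2_sq_nonneg: "n \<ge> 1 \<Longrightarrow> 0 \<le> grid_l2_sq n f"
  unfolding grid_l2_sq_def by (simp add: dx_pos less_imp_le sum_nonneg)

lemma grid_diff_l2_sq_nonneg: "n \<ge> 1 \<Longrightarrow> 0 \<le> grid_diff_l2_sq n f"
  unfolding grid_diff_l2_sq_def by (simp add: dx_pos less_imp_le sum_nonneg)

lemma grid_l2_sq_const: "n \<ge> 1 \<Longrightarrow> grid_l2_sq n (\<lambda>_. c) = c\<^sup>2"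
  unfolding grid_l2_sq_def by (simp add: real_mult_dx mult.commute[of "dx n"])

lemma grid_l2_sq_cell_averages_le:
  assumes "n \<ge> 1" and [measurable]: "g \<in> borel_measurable borel"
  shows "ennreal (grid_l2_sq n (\<lambda>i. (1 / dx n) * set_lebesgue_integral lborel (cell n i) g))
    \<le> (\<integral>\<^sup>+x. ennreal (indicator {0..1} x * (g x)\<^sup>2) \<partial>lborel)"
proof -
  have dx: "dx n > 0" using dx_pos[OF assms(1)] .
  let ?avg = "\<lambda>i. (1 / dx n) * set_lebesgue_integral lborel (cell n i) g"
  have cell_le: "ennreal (dx n * (?avg i)\<^sup>2) \<le> (\<integral>\<^sup>+x. ennreal (indicator (cell n i) x * (g x)\<^sup>2) \<partial>lborel)"
    if "i \<in> {1..n}" for i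
  proof -
    define f where "f x = (1 / dx n) * indicator (cell n i) x" for x
    have [measurable]: "f \<in> borel_measurable borel" unfolding f_def by measurable
    have "(\<integral>\<^sup>+x. f x \<partial>lborel) = ennreal (1 / dx n) * emeasure lborel (cell n i)"
      unfolding f_def using dx
      by (subst nn_integral_cmult_indicator[symmetric]) (auto intro!: nn_integral_cong simp: indicator_def)
    also have "\<dots> = 1" using dx that by (simp add: emeasure_cell[OF assms(1)] ennreal_mult[symmetric])
    finally have mass: "(\<integral>\<^sup>+x. f x \<partial>lborel) \<le> 1" by simp
    have "(\<integral>x. f x * g x \<partial>lborel) = ?avg i"
      unfolding f_def set_lebesgue_integral_def by (simp add: mult.assoc)
    then have "ennreal ((?avg i)\<^sup>2) \<le> (\<integral>\<^sup>+x. f x * (g x)\<^sup>2 \<partial>lborel)"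
      using weighted_mean_square_le[of f lborel g] mass dx by (simp add: f_def)
    also have "\<dots> = ennreal (1 / dx n) * (\<integral>\<^sup>+x. ennreal (indicator (cell n i) x * (g x)\<^sup>2) \<partial>lborel)"
      unfolding f_def using dx
      by (subst nn_integral_cmult[symmetric]) (auto intro!: nn_integral_cong simp: ennreal_mult[symmetric] mult.assoc)
    finally have "ennreal (dx n) * ennreal ((?avg i)\<^sup>2)
        \<le> ennreal (dx n) * ennreal (1 / dx n) * (\<integral>\<^sup>+x. ennreal (indicator (cell n i) x * (g x)\<^sup>2) \<partial>lborel)"
      by (simp add: mult.assoc mult_left_mono)
    then show ?thesis using dx by (simp add: ennreal_mult[symmetric])
  qed
  have "ennreal (grid_l2_sq n ?avg) = (\<Sum>i\<in>{1..n}. ennreal (dx n * (?avg i)\<^sup>2))"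
    unfolding grid_l2_sq_def sum_distrib_left using dx by (simp add: sum_ennreal)
  also have "\<dots> \<le> (\<Sum>i\<in>{1..n}. \<integral>\<^sup>+x. ennreal (indicator (cell n i) x * (g x)\<^sup>2) \<partial>lborel)"
    by (rule sum_mono) (rule cell_le)
  also have "\<dots> = (\<integral>\<^sup>+x. ennreal ((\<Sum>i\<in>{1..n}. indicator (cell n i) x) * (g x)\<^sup>2) \<partial>lborel)"
    by (subst nn_integral_sum[symmetric]) (auto simp: sum_ennreal sum_distrib_right)
  also have "\<dots> \<le> (\<integral>\<^sup>+x. ennreal (indicator {0..1} x * (g x)\<^sup>2) \<partial>lborel)"
    by (intro nn_integral_mono ennreal_leI mult_right_mono sum_indicator_cells_le) simp
  finally show ?thesis .
qed

lemma set_integral_cellwise_const: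
  assumes n: "n \<ge> 1" and F: "\<And>i x. i \<in> {1..n} \<Longrightarrow> x \<in> cell n i \<Longrightarrow> F x = c i"
  shows "set_lebesgue_integral lborel {0..1} F = dx n * (\<Sum>i\<in>{1..n}. c i)"
proof -
  \<comment> \<open>the cells tile [0,1) and the remaining point 1 is a null set\<close>
  have tiling: "indicator {0..1} x *\<^sub>R F x
      = (\<Sum>j\<in>{1..n}. indicator (cell n j) x * c j) + indicator {1} x * F 1" for x
  proof (cases "\<exists>i\<in>{1..n}. x \<in> cell n i")
    case True
    then obtain i where i: "i \<in> {1..n}" "x \<in> cell n i" by blast
    then show ?thesis using cell_subset[OF i(1)] sum_indicator_cell[OF i, of c] F[OF i] by auto
  next
    case False
    then have "x \<notin> {0..<1}" using ex_cell[OF n] by blast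
    with False show ?thesis by (cases "x = 1") (auto simp: indicator_def intro!: sum.neutral)
  qed
  have int_cell: "integrable lborel (\<lambda>x. indicator (cell n j) x * c j)" if "j \<in> {1..n}" for j
    using that emeasure_cell[OF n, of j] by (intro integrable_mult_left) auto
  have "set_lebesgue_integral lborel {0..1} F
      = (\<integral>x. (\<Sum>j\<in>{1..n}. indicator (cell n j) x * c j) + indicator {1} x * F 1 \<partial>lborel)"
    unfolding set_lebesgue_integral_def tiling ..
  also have "\<dots> = (\<integral>x. (\<Sum>j\<in>{1..n}. indicator (cell n j) x * c j) \<partial>lborel)"
    using Bochner_Integration.integrable_sum[of "{1..n}" lborel "\<lambda>j x. indicator (cell n j) x * c j"] int_cell
    by (subst Bochner_Integration.integral_add) auto
  also have "\<dots> = (\<Sum>j\<in>{1..n}. \<integral>x. indicator (cell n j) x * c j \<partial>lborel)"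
    using int_cell by (rule Bochner_Integration.integral_sum)
  also have "\<dots> = (\<Sum>j\<in>{1..n}. dx n * c j)"
    by (rule sum.cong) (auto simp: measure_cell[OF n])
  finally show ?thesis by (simp add: sum_distrib_left)
qed

lemma step_fun_cell:
  assumes "i \<in> {1..n}" "x \<in> cell n i"
  shows "step_fun n w t x = w i t"
  unfolding step_fun_def using sum_indicator_cell[OF assms] .

lemma diffq_cell:
  assumes n: "n \<ge> 1" and W: "\<And>j y. j \<in> {1..n} \<Longrightarrow> y \<in> cell n j \<Longrightarrow> W t y = c j"
    and i: "i \<in> {1..n}" and x: "x \<in> cell n i"
  shows "diffq n W t x = (if i = 1 then 0 else (c i - c (i - 1)) / dx n)"
proof -
  have "real n > 0" using n by simp
  from mem_cell_iff[OF n, of i x] i x have m: "real i - 1 \<le> x * real n" "x * real n < real i" by auto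
  show ?thesis
  proof (cases "i = 1")
    case True
    then have "x < dx n" using m \<open>real n > 0\<close> unfolding dx_def by (simp add: field_simps)
    then show ?thesis using True unfolding diffq_def by simp
  next
    case False
    then have "i \<ge> 2" using i by auto
    then have "\<not> x < dx n" using m \<open>real n > 0\<close> unfolding dx_def by (simp add: field_simps)
    have "(x - dx n) * real n = x * real n - 1" using \<open>real n > 0\<close> unfolding dx_def by (simp add: field_simps)
    then have "x - dx n \<in> cell n (i - 1)"
      using mem_cell_iff[OF n, of "i - 1" "x - dx n"] \<open>i \<ge> 2\<close> m by (simp add: of_nat_diff)
    moreover have "i - 1 \<in> {1..n}" using \<open>i \<ge> 2\<close> i by auto
    ultimately have "W t (x - dx n) = c (i - 1)" using W by blast
    with W[OF i x] False \<open>\<not> x < dx n\<close> show ?thesis unfolding diffq_def by simp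
  qed
qed

lemma set_integral_step_fun_sq:
  assumes "n \<ge> 1"
  shows "set_lebesgue_integral lborel {0..1} (\<lambda>x. (G (step_fun n v t x))\<^sup>2) = grid_l2_sq n (\<lambda>i. G (v i t))"
  unfolding grid_l2_sq_def by (rule set_integral_cellwise_const[OF assms]) (simp add: step_fun_cell)

lemma set_integral_diffq_step_fun_sq:
  assumes n: "n \<ge> 1"
  shows "set_lebesgue_integral lborel {0..1} (\<lambda>x. (diffq n (\<lambda>t x. G (step_fun n v t x)) t x)\<^sup>2)
    = grid_diff_l2_sq n (\<lambda>i. G (v i t))"
proof -
  define D where "D i = ((G (v (Suc i) t) - G (v i t)) / dx n)\<^sup>2" for i
  have "set_lebesgue_integral lborel {0..1} (\<lambda>x. (diffq n (\<lambda>t x. G (step_fun n v t x)) t x)\<^sup>2)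
      = dx n * (\<Sum>i\<in>{1..n}. if i = 1 then 0 else D (i - 1))"
  proof (rule set_integral_cellwise_const[OF n])
    fix i x assume i: "i \<in> {1..n}" and x: "x \<in> cell n i"
    show "(diffq n (\<lambda>t x. G (step_fun n v t x)) t x)\<^sup>2 = (if i = 1 then 0 else D (i - 1))"
      using i by (subst diffq_cell[OF n _ i x]) (auto simp: step_fun_cell D_def)
  qed
  also have "(\<Sum>i\<in>{1..n}. if i = 1 then 0 else D (i - 1)) = (\<Sum>i\<in>{1..<n}. D i)"
    by (induction n) (auto simp: atLeastLessThanSuc)
  finally show ?thesis unfolding grid_diff_l2_sq_def D_def .
qed

lemma deriv_bounds_difference:
  fixes h h' :: "real \<Rightarrow> real"
  assumes h: "\<And>x. (h has_real_derivative h' x) (at x)"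
    and h'_bounds: "\<And>x. d \<le> h' x \<and> h' x \<le> C" and "d \<ge> 0"
  shows "d * (y - x)\<^sup>2 \<le> (y - x) * (h y - h x)" and "\<bar>h y - h x\<bar> \<le> C * \<bar>y - x\<bar>"
proof -
  have ordered: "d * (b - a)\<^sup>2 \<le> (b - a) * (h b - h a) \<and> \<bar>h b - h a\<bar> \<le> C * \<bar>b - a\<bar>"
    if "a < b" for a b
  proof -
    obtain z where z: "h b - h a = (b - a) * h' z" using MVT2[OF \<open>a < b\<close>, of h h'] h by blast
    have "d \<le> h' z" "h' z \<le> C" "0 \<le> h' z" using h'_bounds[of z] \<open>d \<ge> 0\<close> by auto
    with z \<open>a < b\<close> show ?thesis
      by (auto simp: power2_eq_square abs_mult mult_left_mono mult.commute)
  qed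
  have "d * (y - x)\<^sup>2 \<le> (y - x) * (h y - h x) \<and> \<bar>h y - h x\<bar> \<le> C * \<bar>y - x\<bar>"
  proof (cases x y rule: linorder_cases)
    case greater
    then show ?thesis
      using ordered[OF greater] by (simp add: power2_commute abs_minus_commute algebra_simps)
  qed (use ordered in auto)
  then show "d * (y - x)\<^sup>2 \<le> (y - x) * (h y - h x)" "\<bar>h y - h x\<bar> \<le> C * \<bar>y - x\<bar>" by auto
qed

lemma square_le_of_deriv_lower_bound:
  fixes h h' :: "real \<Rightarrow> real"
  assumes h: "\<And>x. (h has_real_derivative h' x) (at x)"
    and h'_bounds: "\<And>x. d \<le> h' x \<and> h' x \<le> C" and "d > 0"
  shows "x\<^sup>2 \<le> 2 / d\<^sup>2 * ((h x)\<^sup>2 + (h 0)\<^sup>2)"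
proof -
  have mono: "d * x\<^sup>2 \<le> x * (h x - h 0)"
    using deriv_bounds_difference(1)[OF h h'_bounds, of 0 x] \<open>d > 0\<close> by (simp add: algebra_simps)
  have "d * \<bar>x\<bar> \<le> \<bar>h x - h 0\<bar>"
  proof (cases "x = 0")
    case False
    have "d * \<bar>x\<bar> * \<bar>x\<bar> = d * x\<^sup>2" by (simp add: power2_eq_square abs_mult_self_eq)
    also have "\<dots> \<le> \<bar>h x - h 0\<bar> * \<bar>x\<bar>"
      using mono by (simp add: abs_mult[symmetric] mult.commute)
    finally show ?thesis using False by simp
  qed simp
  then have "(d * x)\<^sup>2 \<le> (h x - h 0)\<^sup>2"
    using \<open>d > 0\<close> by (simp add: abs_le_square_iff[symmetric] abs_mult)
  also have "\<dots> \<le> 2 * ((h x)\<^sup>2 + (h 0)\<^sup>2)"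
    using sum_squares_ge_zero[of "h x + h 0" 0] by (simp add: power2_eq_square algebra_simps)
  finally have "d\<^sup>2 * x\<^sup>2 \<le> 2 * ((h x)\<^sup>2 + (h 0)\<^sup>2)" by (simp add: power_mult_distrib)
  then show ?thesis using \<open>d > 0\<close> by (simp add: field_simps)
qed

lemma square_le_of_Lipschitz:
  fixes h :: "real \<Rightarrow> real"
  assumes "\<bar>h x - h 0\<bar> \<le> C * \<bar>x\<bar>"
  shows "(h x)\<^sup>2 \<le> 2 * (h 0)\<^sup>2 + 2 * C\<^sup>2 * x\<^sup>2"
proof -
  have "\<bar>h x\<bar> \<le> \<bar>h 0\<bar> + C * \<bar>x\<bar>" using assms by linarith
  then have "\<bar>h x\<bar>\<^sup>2 \<le> (\<bar>h 0\<bar> + C * \<bar>x\<bar>)\<^sup>2" by (rule power_mono) simp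
  also have "\<dots> \<le> 2 * (h 0)\<^sup>2 + 2 * C\<^sup>2 * x\<^sup>2"
    using sum_squares_ge_zero[of "\<bar>h 0\<bar> - C * \<bar>x\<bar>" 0] by (simp add: power2_eq_square algebra_simps)
  finally show ?thesis by simp
qed

text \<open>One term of the discrete energy identity: the difference quotient dissipates by the strong
  monotonicity of h, and the forcing term B r is absorbed by Young's inequality.\<close>
lemma flux_dissipation_le:
  fixes dx d C Cb B r x y hx hy :: real
  assumes "dx > 0" "d > 0"
    and mono: "d * (y - x)\<^sup>2 \<le> (y - x) * (hy - hx)" and Lip: "\<bar>hy - hx\<bar> \<le> C * \<bar>y - x\<bar>"
    and B: "\<bar>B\<bar> \<le> Cb"
  shows "- ((y - x) / dx + B * r) * (hy - hx)
    \<le> dx * (- (d / 2) * ((y - x) / dx)\<^sup>2 + (Cb * C)\<^sup>2 / (2 * d) * r\<^sup>2)"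
proof -
  define D where "D = (y - x) / dx"
  have yx: "y - x = dx * D" unfolding D_def using \<open>dx > 0\<close> by simp
  have "dx * (d * dx * D\<^sup>2) \<le> dx * (D * (hy - hx))"
    using mono unfolding yx by (simp add: power2_eq_square algebra_simps)
  then have diss: "d * dx * D\<^sup>2 \<le> D * (hy - hx)" using \<open>dx > 0\<close> by simp
  have "\<bar>B * r * (hy - hx)\<bar> \<le> Cb * \<bar>r\<bar> * (C * (dx * \<bar>D\<bar>))"
    unfolding abs_mult using Lip B \<open>dx > 0\<close> unfolding yx
    by (intro mult_mono) (auto simp: abs_mult)
  then have forcing: "\<bar>B * r * (hy - hx)\<bar> \<le> dx * (Cb * C * \<bar>r\<bar> * \<bar>D\<bar>)" by (simp add: algebra_simps)
  have "0 \<le> (d * \<bar>D\<bar> - Cb * C * \<bar>r\<bar>)\<^sup>2 / (2 * d)" using \<open>d > 0\<close> by simp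
  also have "\<dots> = d / 2 * D\<^sup>2 + (Cb * C)\<^sup>2 / (2 * d) * r\<^sup>2 - Cb * C * \<bar>r\<bar> * \<bar>D\<bar>"
    using \<open>d > 0\<close> by (simp add: power2_eq_square field_simps)
  finally have young: "Cb * C * \<bar>r\<bar> * \<bar>D\<bar> \<le> d / 2 * D\<^sup>2 + (Cb * C)\<^sup>2 / (2 * d) * r\<^sup>2" by simp
  have "- (D + B * r) * (hy - hx) \<le> - (d * dx * D\<^sup>2) + dx * (Cb * C * \<bar>r\<bar> * \<bar>D\<bar>)"
    using diss forcing by (simp add: algebra_simps abs_le_iff)
  also have "\<dots> \<le> dx * (- (d / 2) * D\<^sup>2 + (Cb * C)\<^sup>2 / (2 * d) * r\<^sup>2)"
    using mult_left_mono[OF young, of dx] \<open>dx > 0\<close> by (simp add: algebra_simps)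
  finally show ?thesis unfolding D_def .
qed

lemma sum_mult_backward_diff_eq:
  fixes H A :: "nat \<Rightarrow> real"
  assumes "A 0 = 0" "A n = 0"
  shows "(\<Sum>i\<in>{1..n}. H i * (A i - A (i - 1))) = - (\<Sum>i\<in>{1..<n}. A i * (H (Suc i) - H i))"
proof -
  have "(\<Sum>i\<in>{1..m}. H i * (A i - A (i - 1))) = H m * A m - (\<Sum>i\<in>{1..<m}. A i * (H (Suc i) - H i))" for m
  proof (induction m)
    case (Suc m)
    then show ?case
      using assms(1) by (cases "m = 0") (auto simp: atLeastLessThanSuc algebra_simps)
  qed (use assms in simp)
  then show ?thesis using assms(2) by simp
qed

lemma integral_le_of_nn_integral_majorant:
  fixes g :: "real \<Rightarrow> real"
  assumes g: "continuous_on {a..b} g"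
    and major: "\<And>s. s \<in> {a..b} \<Longrightarrow> ennreal (g s) \<le> R s"
    and bound: "(\<integral>\<^sup>+s. R s * indicator {a..b} s \<partial>lborel) \<le> ennreal P" and "P \<ge> 0"
  shows "integral {a..b} g \<le> P"
proof -
  let ?g = "\<lambda>s. max (g s) 0"
  have "continuous_on {a..b} ?g" using g by (intro continuous_intros)
  then have g_pos_int: "?g integrable_on {a..b}" by (rule integrable_continuous_real)
  have "integral {a..b} g \<le> integral {a..b} ?g"
    using integrable_continuous_real[OF g] g_pos_int by (rule integral_le) simp
  moreover have "ennreal (integral {a..b} ?g) = (\<integral>\<^sup>+s. ennreal (?g s) * indicator {a..b} s \<partial>lborel)"
    using g_pos_int by (intro nn_integral_has_integral_lebesgue'[symmetric]) auto
  moreover have "\<dots> \<le> (\<integral>\<^sup>+s. R s * indicator {a..b} s \<partial>lborel)"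
    using major by (intro nn_integral_mono) (auto simp: max_def indicator_def)
  ultimately show ?thesis
    using bound \<open>P \<ge> 0\<close> by (metis order_trans ennreal_le_iff)
qed

text \<open>Only the majorant R has to be measurable: the forcing it dominates (below, the cell averages
  of rho) need not be known to be measurable in t.\<close>
lemma energy_inequality:
  fixes N N' G :: "real \<Rightarrow> real"
  assumes N: "\<And>t. t \<in> {0..T} \<Longrightarrow> (N has_real_derivative N' t) (at t within {0..T})"
    and N'_cont: "continuous_on {0..T} N'" and G_cont: "continuous_on {0..T} G"
    and major: "\<And>t. t \<in> {0..T} \<Longrightarrow> ennreal (N' t + c * G t) \<le> ennreal K * R t"
    and [measurable]: "R \<in> borel_measurable lborel" and R_int: "(\<integral>\<^sup>+t. R t \<partial>lborel) \<le> ennreal P"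
    and "K \<ge> 0" "P \<ge> 0" and t: "t \<in> {0..T}"
  shows "N t - N 0 + c * integral {0..t} G \<le> K * P"
proof -
  have sub: "{0..t} \<subseteq> {0..T}" using t by auto
  have "(N' has_integral N t - N 0) {0..t}"
  proof (rule fundamental_theorem_of_calculus)
    fix s assume "s \<in> {0..t}"
    with sub show "(N has_vector_derivative N' s) (at s within {0..t})"
      using DERIV_subset[OF N sub] by (auto simp: has_real_derivative_iff_has_vector_derivative)
  qed (use t in auto)
  moreover have "G integrable_on {0..t}"
    using continuous_on_subset[OF G_cont sub] by (rule integrable_continuous_real)
  ultimately have "N t - N 0 + c * integral {0..t} G = integral {0..t} (\<lambda>s. N' s + c * G s)"
    by (subst integral_add) (auto intro: has_integral_integrable integrable_on_mult_right simp: integral_unique)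
  also have "integral {0..t} (\<lambda>s. N' s + c * G s) \<le> K * P"
  proof (rule integral_le_of_nn_integral_majorant)
    show "continuous_on {0..t} (\<lambda>s. N' s + c * G s)"
      using sub by (intro continuous_intros continuous_on_subset[OF N'_cont] continuous_on_subset[OF G_cont])
    have "(\<integral>\<^sup>+s. ennreal K * R s * indicator {0..t} s \<partial>lborel) \<le> (\<integral>\<^sup>+s. ennreal K * R s \<partial>lborel)"
      by (intro nn_integral_mono) (auto simp: indicator_def)
    also have "\<dots> \<le> ennreal K * ennreal P"
      by (subst nn_integral_cmult) (auto intro: mult_left_mono R_int)
    finally show "(\<integral>\<^sup>+s. ennreal K * R s * indicator {0..t} s \<partial>lborel) \<le> ennreal (K * P)"
      using \<open>K \<ge> 0\<close> \<open>P \<ge> 0\<close> by (simp add: ennreal_mult)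
  qed (use major sub \<open>K \<ge> 0\<close> \<open>P \<ge> 0\<close> in auto)
  finally show ?thesis .
qed

definition ext_flux :: "(real \<Rightarrow> real) \<Rightarrow> (real \<times> real \<Rightarrow> real) \<Rightarrow> real \<Rightarrow> real \<Rightarrow> nat
    \<Rightarrow> (nat \<Rightarrow> real \<Rightarrow> real) \<Rightarrow> nat \<Rightarrow> real \<Rightarrow> real" where
  "ext_flux b p T \<delta> n v i t = (if 1 \<le> i \<and> i < n then flux b p T \<delta> n v i t else 0)"

text \<open>With the no-flux boundary values a(0) = a(n) = 0 the three equations of the scheme become one.\<close>
lemma scheme_sol_conservation_form:
  assumes "scheme_sol h' b p v0 T \<delta> n v v'" "n \<ge> 2" "t \<in> {0..T}" "i \<in> {1..n}"
  shows "h' (v i t) * v' i t = (ext_flux b p T \<delta> n v i t - ext_flux b p T \<delta> n v (i - 1) t) / dx n"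
proof -
  consider "i = 1" | "2 \<le> i \<and> i \<le> n - 1" | "i = n" using assms(2,4) by fastforce
  then show ?thesis
    using assms(1-3) unfolding scheme_sol_def ext_flux_def by cases auto
qed

lemma scheme_sol_continuous:
  assumes "scheme_sol h' b p v0 T \<delta> n v v'" "i \<in> {1..n}"
  shows "continuous_on {0..T} (v i)"
proof (rule DERIV_continuous_on)
  show "(v i has_real_derivative v' i t) (at t within {0..T})" if "t \<in> {0..T}" for t
    using assms that unfolding scheme_sol_def by blast
qed

lemma scheme_energy_has_derivative:
  assumes h: "\<And>x. (h has_real_derivative h' x) (at x)"
    and sol: "scheme_sol h' b p v0 T \<delta> n v v'" and t: "t \<in> {0..T}"
  shows "((\<lambda>t. grid_l2_sq n (\<lambda>i. h (v i t))) has_real_derivative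
      dx n * (\<Sum>i\<in>{1..n}. 2 * h (v i t) * (h' (v i t) * v' i t))) (at t within {0..T})"
proof -
  have "((\<lambda>t. (h (v i t))\<^sup>2) has_real_derivative 2 * h (v i t) * (h' (v i t) * v' i t)) (at t within {0..T})"
    if "i \<in> {1..n}" for i
    using DERIV_chain2[OF h, of "v i" "v' i t" t "{0..T}"] sol t that
    unfolding scheme_sol_def by (auto intro!: derivative_eq_intros)
  then show ?thesis unfolding grid_l2_sq_def by (intro DERIV_cmult DERIV_sum) auto
qed

lemma scheme_energy_derivative_eq:
  assumes "scheme_sol h' b p v0 T \<delta> n v v'" "n \<ge> 2" "t \<in> {0..T}"
  shows "dx n * (\<Sum>i\<in>{1..n}. 2 * h (v i t) * (h' (v i t) * v' i t))
    = - 2 * (\<Sum>i\<in>{1..<n}. flux b p T \<delta> n v i t * (h (v (Suc i) t) - h (v i t)))"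
proof -
  let ?a = "\<lambda>i. ext_flux b p T \<delta> n v i t"
  have "dx n * (\<Sum>i\<in>{1..n}. 2 * h (v i t) * (h' (v i t) * v' i t))
      = 2 * (\<Sum>i\<in>{1..n}. h (v i t) * (?a i - ?a (i - 1)))"
    using dx_pos[of n] assms
    by (simp add: sum_distrib_left scheme_sol_conservation_form[OF assms] mult.assoc)
  also have "\<dots> = - 2 * (\<Sum>i\<in>{1..<n}. ?a i * (h (v (Suc i) t) - h (v i t)))"
    by (subst sum_mult_backward_diff_eq) (auto simp: ext_flux_def)
  finally show ?thesis by (simp add: ext_flux_def)
qed

lemma scheme_dissipation_le:
  assumes h: "\<And>x. (h has_real_derivative h' x) (at x)"
    and h'_bounds: "\<And>x. \<delta>h \<le> h' x \<and> h' x \<le> Ch" and "\<delta>h > 0"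
    and b_bound: "\<And>x. \<bar>b x\<bar> \<le> Cb" and "n \<ge> 1"
  shows "- 2 * (\<Sum>i\<in>{1..<n}. flux b p T \<delta> n v i t * (h (v (Suc i) t) - h (v i t)))
      + \<delta>h * grid_diff_l2_sq n (\<lambda>i. v i t)
    \<le> (Cb * Ch)\<^sup>2 / \<delta>h * grid_l2_sq n (\<lambda>i. rho_i p T \<delta> n i t)"
proof -
  let ?r = "\<lambda>i. rho_i p T \<delta> n i t" and ?D = "\<lambda>i. ((v (Suc i) t - v i t) / dx n)\<^sup>2"
  let ?K = "(Cb * Ch)\<^sup>2 / (2 * \<delta>h)"
  have dx: "dx n > 0" using dx_pos[OF \<open>n \<ge> 1\<close>] .
  have term_le: "- (flux b p T \<delta> n v i t * (h (v (Suc i) t) - h (v i t)))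
      \<le> dx n * (- (\<delta>h / 2) * ?D i + ?K * (?r i)\<^sup>2)" for i
  proof -
    have "- ((v (Suc i) t - v i t) / dx n + b ((v i t + v (Suc i) t) / 2) * ?r i) * (h (v (Suc i) t) - h (v i t))
        \<le> dx n * (- (\<delta>h / 2) * ?D i + ?K * (?r i)\<^sup>2)"
      using \<open>\<delta>h > 0\<close>
      by (intro flux_dissipation_le[OF dx \<open>\<delta>h > 0\<close> _ _ b_bound]
          deriv_bounds_difference[OF h h'_bounds]) simp_all
    then show ?thesis unfolding flux_def minus_mult_left .
  qed
  have "- (\<Sum>i\<in>{1..<n}. flux b p T \<delta> n v i t * (h (v (Suc i) t) - h (v i t)))
      \<le> (\<Sum>i\<in>{1..<n}. dx n * (- (\<delta>h / 2) * ?D i + ?K * (?r i)\<^sup>2))"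
    unfolding sum_negf[symmetric] by (rule sum_mono) (rule term_le)
  also have "\<dots> = (\<Sum>i\<in>{1..<n}. - (\<delta>h / 2) * (dx n * ?D i) + ?K * (dx n * (?r i)\<^sup>2))"
    by (rule sum.cong) (simp_all add: algebra_simps)
  also have "\<dots> = - (\<delta>h / 2) * grid_diff_l2_sq n (\<lambda>i. v i t) + ?K * (dx n * (\<Sum>i\<in>{1..<n}. (?r i)\<^sup>2))"
    unfolding grid_diff_l2_sq_def by (simp only: sum.distrib sum_distrib_left)
  also have "\<dots> \<le> - (\<delta>h / 2) * grid_diff_l2_sq n (\<lambda>i. v i t) + ?K * grid_l2_sq n ?r"
    unfolding grid_l2_sq_def using dx \<open>\<delta>h > 0\<close>
    by (intro add_left_mono mult_left_mono sum_mono2) auto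
  finally show ?thesis using \<open>\<delta>h > 0\<close> by (simp add: field_simps)
qed

lemma grid_l2_sq_rho_i_le:
  assumes "p \<in> borel_measurable borel" "n \<ge> 1"
  shows "ennreal (grid_l2_sq n (\<lambda>i. rho_i p T \<delta> n i t)) \<le> (\<integral>\<^sup>+\<xi>. ennreal ((rho p T \<delta> (t, \<xi>))\<^sup>2) \<partial>lborel)"
proof -
  have [measurable]: "(\<lambda>\<xi>. rho p T \<delta> (t, \<xi>)) \<in> borel_measurable borel"
    using assms(1) by measurable
  have "ennreal (grid_l2_sq n (\<lambda>i. rho_i p T \<delta> n i t))
      \<le> (\<integral>\<^sup>+\<xi>. ennreal (indicator {0..1} \<xi> * (rho p T \<delta> (t, \<xi>))\<^sup>2) \<partial>lborel)"
    unfolding rho_i_def by (rule grid_l2_sq_cell_averages_le) (use assms in auto)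
  also have "\<dots> \<le> (\<integral>\<^sup>+\<xi>. ennreal ((rho p T \<delta> (t, \<xi>))\<^sup>2) \<partial>lborel)"
    by (intro nn_integral_mono ennreal_leI) (auto simp: indicator_def)
  finally show ?thesis .
qed

lemma scheme_initial_energy_le:
  assumes h: "\<And>x. (h has_real_derivative h' x) (at x)"
    and h'_bounds: "\<And>x. \<delta>h \<le> h' x \<and> h' x \<le> Ch" and "\<delta>h \<ge> 0"
    and sol: "scheme_sol h' b p v0 T \<delta> n v v'" and "n \<ge> 1"
    and [measurable]: "v0 \<in> borel_measurable borel"
    and v0_L2: "set_integrable lborel {0..1} (\<lambda>x. (v0 x)\<^sup>2)"
  shows "grid_l2_sq n (\<lambda>i. h (v i 0)) \<le> 2 * (h 0)\<^sup>2 + 2 * Ch\<^sup>2 * set_lebesgue_integral lborel {0..1} (\<lambda>x. (v0 x)\<^sup>2)"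
proof -
  let ?I0 = "set_lebesgue_integral lborel {0..1} (\<lambda>x. (v0 x)\<^sup>2)"
  have "ennreal (grid_l2_sq n (v0_i v0 n)) \<le> (\<integral>\<^sup>+x. ennreal (indicator {0..1} x * (v0 x)\<^sup>2) \<partial>lborel)"
    unfolding v0_i_def by (rule grid_l2_sq_cell_averages_le) (use \<open>n \<ge> 1\<close> in auto)
  also have "\<dots> = ennreal ?I0"
    using v0_L2 unfolding set_integrable_def set_lebesgue_integral_def
    by (simp add: nn_integral_eq_integral)
  finally have v0_le: "grid_l2_sq n (v0_i v0 n) \<le> ?I0"
    by (simp add: ennreal_le_iff set_lebesgue_integral_def indicator_def)
  have "grid_l2_sq n (\<lambda>i. h (v i 0)) = dx n * (\<Sum>i\<in>{1..n}. (h (v0_i v0 n i))\<^sup>2)"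
    using sol unfolding grid_l2_sq_def scheme_sol_def by simp
  also have "\<dots> \<le> dx n * (\<Sum>i\<in>{1..n}. 2 * (h 0)\<^sup>2 + 2 * Ch\<^sup>2 * (v0_i v0 n i)\<^sup>2)"
    using dx_pos[OF \<open>n \<ge> 1\<close>] deriv_bounds_difference(2)[OF h h'_bounds \<open>\<delta>h \<ge> 0\<close>, of _ 0]
    by (intro mult_left_mono sum_mono square_le_of_Lipschitz) auto
  also have "\<dots> = 2 * (h 0)\<^sup>2 + 2 * Ch\<^sup>2 * grid_l2_sq n (v0_i v0 n)"
    using real_mult_dx[OF \<open>n \<ge> 1\<close>]
    by (simp add: grid_l2_sq_def sum.distrib sum_distrib_left algebra_simps)
  also have "\<dots> \<le> 2 * (h 0)\<^sup>2 + 2 * Ch\<^sup>2 * ?I0"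
    using v0_le by (simp add: mult_left_mono)
  finally show ?thesis .
qed

lemma grid_l2_sq_le_of_deriv_lower_bound:
  fixes h h' :: "real \<Rightarrow> real"
  assumes "\<And>x. (h has_real_derivative h' x) (at x)"
    and "\<And>x. d \<le> h' x \<and> h' x \<le> C" and "d > 0" and "n \<ge> 1"
  shows "grid_l2_sq n f \<le> 2 / d\<^sup>2 * (grid_l2_sq n (\<lambda>i. h (f i)) + (h 0)\<^sup>2)"
proof -
  have "grid_l2_sq n f \<le> dx n * (\<Sum>i\<in>{1..n}. 2 / d\<^sup>2 * ((h (f i))\<^sup>2 + (h 0)\<^sup>2))"
    unfolding grid_l2_sq_def using dx_pos[OF \<open>n \<ge> 1\<close>]
    by (intro mult_left_mono sum_mono square_le_of_deriv_lower_bound[OF assms(1-3)]) auto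
  also have "\<dots> = 2 / d\<^sup>2 * (grid_l2_sq n (\<lambda>i. h (f i)) + grid_l2_sq n (\<lambda>_. h 0))"
    unfolding grid_l2_sq_def by (simp add: sum.distrib sum_distrib_left algebra_simps)
  finally show ?thesis using grid_l2_sq_const[OF \<open>n \<ge> 1\<close>] by simp
qed


lemma grid_diff_l2_sq_comp_le:
  assumes "\<And>x y. \<bar>h y - h x\<bar> \<le> C * \<bar>y - x\<bar>"
  shows "grid_diff_l2_sq n (\<lambda>i. h (f i)) \<le> C\<^sup>2 * grid_diff_l2_sq n f"
proof -
  have "((h (f (Suc i)) - h (f i)) / dx n)\<^sup>2 \<le> C\<^sup>2 * ((f (Suc i) - f i) / dx n)\<^sup>2" for i
  proof -
    have "C * \<bar>f (Suc i) - f i\<bar> \<le> \<bar>C\<bar> * \<bar>f (Suc i) - f i\<bar>"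
      by (rule mult_right_mono) simp_all
    then have "\<bar>h (f (Suc i)) - h (f i)\<bar> \<le> \<bar>C\<bar> * \<bar>f (Suc i) - f i\<bar>"
      using assms[of "f (Suc i)" "f i"] by linarith
    then have "\<bar>h (f (Suc i)) - h (f i)\<bar> / \<bar>dx n\<bar> \<le> \<bar>C\<bar> * \<bar>f (Suc i) - f i\<bar> / \<bar>dx n\<bar>"
      by (rule divide_right_mono) simp
    then have "\<bar>(h (f (Suc i)) - h (f i)) / dx n\<bar> \<le> \<bar>C * ((f (Suc i) - f i) / dx n)\<bar>"
      by (simp only: abs_divide abs_mult times_divide_eq_right)
    then show ?thesis by (simp only: abs_le_square_iff power_mult_distrib)
  qed
  then have "(\<Sum>i\<in>{1..<n}. ((h (f (Suc i)) - h (f i)) / dx n)\<^sup>2) \<le> C\<^sup>2 * (\<Sum>i\<in>{1..<n}. ((f (Suc i) - f i) / dx n)\<^sup>2)"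
    unfolding sum_distrib_left by (rule sum_mono)
  moreover have "dx n \<ge> 0" unfolding dx_def by simp
  ultimately have "grid_diff_l2_sq n (\<lambda>i. h (f i)) \<le> dx n * (C\<^sup>2 * (\<Sum>i\<in>{1..<n}. ((f (Suc i) - f i) / dx n)\<^sup>2))"
    unfolding grid_diff_l2_sq_def by (rule mult_left_mono)
  then show ?thesis unfolding grid_diff_l2_sq_def by (simp only: mult.left_commute)
qed

lemma scheme_energy_derivative_continuous:
  assumes h: "\<And>x. (h has_real_derivative h' x) (at x)" and h'_cont: "continuous_on UNIV h'"
    and sol: "scheme_sol h' b p v0 T \<delta> n v v'"
  shows "continuous_on {0..T} (\<lambda>t. dx n * (\<Sum>i\<in>{1..n}. 2 * h (v i t) * (h' (v i t) * v' i t)))"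
proof -
  have v_cont: "continuous_on {0..T} (v i)" if "i \<in> {1..n}" for i
    using scheme_sol_continuous[OF sol that] .
  have h_cont: "continuous_on UNIV h"
    using h by (intro has_real_derivative_imp_continuous_on) auto
  show ?thesis
    using sol unfolding scheme_sol_def
    by (intro continuous_intros continuous_on_compose2[OF h_cont v_cont]
        continuous_on_compose2[OF h'_cont v_cont] v_cont) auto
qed

lemma grid_diff_l2_sq_continuous:
  assumes "\<And>i. i \<in> {1..n} \<Longrightarrow> continuous_on S (f i)"
  shows "continuous_on S (\<lambda>t. grid_diff_l2_sq n (\<lambda>i. f i t))"
  unfolding grid_diff_l2_sq_def using dx_pos[of n]
  by (cases "n = 0") (auto intro!: continuous_intros assms)

context
  fixes h h' b v0 :: "real \<Rightarrow> real" and p :: "real \<times> real \<Rightarrow> real"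
    and T \<delta>h Ch Cb \<delta> :: real and n :: nat and v v' :: "nat \<Rightarrow> real \<Rightarrow> real"
  assumes h: "\<And>x. (h has_real_derivative h' x) (at x)" and h'_cont: "continuous_on UNIV h'"
    and h'_bounds: "\<And>x. \<delta>h \<le> h' x \<and> h' x \<le> Ch" and \<delta>h_pos: "\<delta>h > 0"
    and b_bound: "\<And>x. \<bar>b x\<bar> \<le> Cb"
    and p_meas [measurable]: "p \<in> borel_measurable borel"
    and p_L2: "set_integrable lborel (QT T) (\<lambda>z. (p z)\<^sup>2)"
    and v0_meas [measurable]: "v0 \<in> borel_measurable borel"
    and v0_L2: "set_integrable lborel {0..1} (\<lambda>x. (v0 x)\<^sup>2)"
    and sol: "scheme_sol h' b p v0 T \<delta> n v v'" and n: "n \<ge> 2" and \<delta>_pos: "\<delta> > 0" and T: "T \<ge> 0"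
begin

lemma scheme_energy_bounds:
  defines "M \<equiv> 2 * (h 0)\<^sup>2 + 2 * Ch\<^sup>2 * set_lebesgue_integral lborel {0..1} (\<lambda>x. (v0 x)\<^sup>2)
      + (Cb * Ch)\<^sup>2 / \<delta>h * set_lebesgue_integral lborel (QT T) (\<lambda>z. (p z)\<^sup>2)"
  shows "\<And>t. t \<in> {0..T} \<Longrightarrow> grid_l2_sq n (\<lambda>i. h (v i t)) \<le> M"
    and "integral {0..T} (\<lambda>t. grid_diff_l2_sq n (\<lambda>i. v i t)) \<le> M / \<delta>h"
proof -
  let ?N = "\<lambda>t. grid_l2_sq n (\<lambda>i. h (v i t))"
  let ?N' = "\<lambda>t. dx n * (\<Sum>i\<in>{1..n}. 2 * h (v i t) * (h' (v i t) * v' i t))"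
  let ?G = "\<lambda>t. grid_diff_l2_sq n (\<lambda>i. v i t)"
  let ?R = "\<lambda>t. \<integral>\<^sup>+\<xi>. ennreal ((rho p T \<delta> (t, \<xi>))\<^sup>2) \<partial>lborel"
  let ?P = "set_lebesgue_integral lborel (QT T) (\<lambda>z. (p z)\<^sup>2)"
  let ?K = "(Cb * Ch)\<^sup>2 / \<delta>h"
  have "n \<ge> 1" using n by simp
  have K_nonneg: "?K \<ge> 0" and P_nonneg: "?P \<ge> 0"
    using \<delta>h_pos by (auto simp: set_lebesgue_integral_def indicator_def)
  have G_cont: "continuous_on {0..T} ?G"
    by (intro grid_diff_l2_sq_continuous scheme_sol_continuous[OF sol])
  have major: "ennreal (?N' t + \<delta>h * ?G t) \<le> ennreal ?K * ?R t" if "t \<in> {0..T}" for t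
  proof -
    have "?N' t + \<delta>h * ?G t \<le> ?K * grid_l2_sq n (\<lambda>i. rho_i p T \<delta> n i t)"
      unfolding scheme_energy_derivative_eq[OF sol n that]
      by (rule scheme_dissipation_le[OF h h'_bounds \<delta>h_pos b_bound \<open>n \<ge> 1\<close>])
    then have "ennreal (?N' t + \<delta>h * ?G t) \<le> ennreal ?K * ennreal (grid_l2_sq n (\<lambda>i. rho_i p T \<delta> n i t))"
      using K_nonneg grid_l2_sq_nonneg[OF \<open>n \<ge> 1\<close>] by (simp add: ennreal_mult[symmetric] ennreal_leI)
    also have "\<dots> \<le> ennreal ?K * ?R t"
      by (intro mult_left_mono grid_l2_sq_rho_i_le p_meas \<open>n \<ge> 1\<close>) simp
    finally show ?thesis .
  qed
  have energy: "?N t - ?N 0 + \<delta>h * integral {0..t} ?G \<le> ?K * ?P" if "t \<in> {0..T}" for t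
  proof (rule energy_inequality[OF scheme_energy_has_derivative[OF h sol]
        scheme_energy_derivative_continuous[OF h h'_cont sol] G_cont major _ _ K_nonneg P_nonneg that])
    show "?R \<in> borel_measurable lborel"
      by (rule lborel.borel_measurable_nn_integral) measurable
    show "(\<integral>\<^sup>+t. ?R t \<partial>lborel) \<le> ennreal ?P"
      by (rule nn_integral_rho_slices_le[OF p_meas \<delta>_pos p_L2])
  qed
  have N0: "?N 0 + ?K * ?P \<le> M"
    using scheme_initial_energy_le[OF h h'_bounds _ sol \<open>n \<ge> 1\<close> v0_meas v0_L2] \<delta>h_pos
    unfolding M_def by auto
  have G_int_nonneg: "integral {0..t} ?G \<ge> 0" if "t \<in> {0..T}" for t
    using continuous_on_subset[OF G_cont, of "{0..t}"] that grid_diff_l2_sq_nonneg[OF \<open>n \<ge> 1\<close>]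
    by (intro integral_nonneg integrable_continuous_real) auto
  show "?N t \<le> M" if "t \<in> {0..T}" for t
    using energy[OF that] N0 mult_nonneg_nonneg[OF less_imp_le[OF \<delta>h_pos] G_int_nonneg[OF that]]
    by linarith
  have "\<delta>h * integral {0..T} ?G \<le> M"
    using energy[of T] N0 grid_l2_sq_nonneg[OF \<open>n \<ge> 1\<close>, of "\<lambda>i. h (v i T)"] T by auto
  then show "integral {0..T} ?G \<le> M / \<delta>h"
    using \<delta>h_pos by (simp add: field_simps)
qed

lemma scheme_a_priori_bounds:
  defines "M \<equiv> 2 * (h 0)\<^sup>2 + 2 * Ch\<^sup>2 * set_lebesgue_integral lborel {0..1} (\<lambda>x. (v0 x)\<^sup>2)
      + (Cb * Ch)\<^sup>2 / \<delta>h * set_lebesgue_integral lborel (QT T) (\<lambda>z. (p z)\<^sup>2)"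
  shows "\<And>t. t \<in> {0..T} \<Longrightarrow> grid_l2_sq n (\<lambda>i. v i t) \<le> 2 / \<delta>h\<^sup>2 * (M + (h 0)\<^sup>2)"
    and "\<And>t. t \<in> {0..T} \<Longrightarrow> grid_l2_sq n (\<lambda>i. h (v i t)) \<le> M"
    and "set_lebesgue_integral lborel {0..T} (\<lambda>t. grid_diff_l2_sq n (\<lambda>i. v i t)) \<le> M / \<delta>h"
    and "set_lebesgue_integral lborel {0..T} (\<lambda>t. grid_diff_l2_sq n (\<lambda>i. h (v i t))) \<le> Ch\<^sup>2 * (M / \<delta>h)"
proof -
  note energy = scheme_energy_bounds[folded M_def]
  have "n \<ge> 1" using n by simp
  have v_cont: "continuous_on {0..T} (v i)" if "i \<in> {1..n}" for i
    using scheme_sol_continuous[OF sol that] .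
  have h_cont: "continuous_on UNIV h"
    using h by (intro has_real_derivative_imp_continuous_on) auto
  have hv_cont: "continuous_on {0..T} (\<lambda>t. h (v i t))" if "i \<in> {1..n}" for i
    using continuous_on_compose2[OF h_cont v_cont[OF that]] by simp
  let ?G = "\<lambda>t. grid_diff_l2_sq n (\<lambda>i. v i t)" and ?Gh = "\<lambda>t. grid_diff_l2_sq n (\<lambda>i. h (v i t))"
  have G_cont: "continuous_on {0..T} ?G" "continuous_on {0..T} ?Gh"
    using v_cont hv_cont by (auto intro: grid_diff_l2_sq_continuous)
  then have G_int: "set_lebesgue_integral lborel {0..T} ?G = integral {0..T} ?G"
    "set_lebesgue_integral lborel {0..T} ?Gh = integral {0..T} ?Gh"
    by (auto intro: set_borel_integral_eq_integral(2) borel_integrable_atLeastAtMost')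
  show "grid_l2_sq n (\<lambda>i. v i t) \<le> 2 / \<delta>h\<^sup>2 * (M + (h 0)\<^sup>2)" if "t \<in> {0..T}" for t
    by (rule order_trans[OF grid_l2_sq_le_of_deriv_lower_bound[OF h h'_bounds \<delta>h_pos \<open>n \<ge> 1\<close>]])
      (intro mult_left_mono add_right_mono energy(1)[OF that]; simp)
  show "grid_l2_sq n (\<lambda>i. h (v i t)) \<le> M" if "t \<in> {0..T}" for t
    using energy(1)[OF that] .
  show "set_lebesgue_integral lborel {0..T} ?G \<le> M / \<delta>h"
    unfolding G_int using energy(2) .
  have "integral {0..T} ?Gh \<le> integral {0..T} (\<lambda>t. Ch\<^sup>2 * ?G t)"
    using G_cont grid_diff_l2_sq_comp_le[OF deriv_bounds_difference(2)[OF h h'_bounds]] \<delta>h_pos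
    by (intro integral_le integrable_continuous_real continuous_intros) auto
  also have "\<dots> \<le> Ch\<^sup>2 * (M / \<delta>h)"
    using energy(2) by (simp only: integral_mult_right mult_left_mono zero_le_power2)
  finally show "set_lebesgue_integral lborel {0..T} ?Gh \<le> Ch\<^sup>2 * (M / \<delta>h)"
    unfolding G_int .
qed

end

theorem lemma4p1:
  fixes h h' h'' b b' b'' v0 :: "real \<Rightarrow> real"
    and p :: "real \<times> real \<Rightarrow> real"
    and T \<delta>h Ch \<delta>b Cb :: real
  assumes T: "T > 0"
    and h1: "\<And>x. (h has_real_derivative h' x) (at x)"
    and h2: "\<And>x. (h' has_real_derivative h'' x) (at x)"
    and h2c: "continuous_on UNIV h''"
    and hpos: "\<delta>h > 0" "Ch > 0"
    and hbd: "\<And>x. \<delta>h \<le> h' x \<and> h' x \<le> Ch" "\<And>x. \<bar>h'' x\<bar> \<le> Ch"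
    and b1: "\<And>x. (b has_real_derivative b' x) (at x)"
    and b2: "\<And>x. (b' has_real_derivative b'' x) (at x)"
    and b2c: "continuous_on UNIV b''"
    and bpos: "\<delta>b > 0" "Cb > 0"
    and bbd: "\<And>x. \<delta>b \<le> b x \<and> b x \<le> Cb" "\<And>x. \<bar>b' x\<bar> \<le> Cb" "\<And>x. \<bar>b'' x\<bar> \<le> Cb"
    and pmeas: "p \<in> borel_measurable lborel"
    and pL2: "set_integrable lborel (QT T) (\<lambda>z. (p z)\<^sup>2)"
    and v0meas: "v0 \<in> borel_measurable lborel"
    and v0L2: "set_integrable lborel {0..1} (\<lambda>x. (v0 x)\<^sup>2)"
  shows "\<exists>C>0. \<forall>n::nat. \<forall>\<delta>>0. \<forall>v v'. n \<ge> 2 \<and> scheme_sol h' b p v0 T \<delta> n v v' \<longrightarrow>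
     (let V = step_fun n v; Z = (\<lambda>t x. h (V t x)) in
       (\<forall>t\<in>{0..T}.
          set_lebesgue_integral lborel {0..1} (\<lambda>x. (V t x)\<^sup>2) \<le> C \<and>
          set_lebesgue_integral lborel {0..1} (\<lambda>x. (Z t x)\<^sup>2) \<le> C) \<and>
       set_lebesgue_integral lborel {0..T}
          (\<lambda>t. set_lebesgue_integral lborel {0..1} (\<lambda>x. (diffq n V t x)\<^sup>2)) \<le> C \<and>
       set_lebesgue_integral lborel {0..T}
          (\<lambda>t. set_lebesgue_integral lborel {0..1} (\<lambda>x. (diffq n Z t x)\<^sup>2)) \<le> C)"
proof -
  have h'_cont: "continuous_on UNIV h'"
    using h2 by (intro has_real_derivative_imp_continuous_on) auto
  have b_bound: "\<bar>b x\<bar> \<le> Cb" for x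
    using bbd(1)[of x] bpos by auto
  have p_meas: "p \<in> borel_measurable borel" and v0_meas: "v0 \<in> borel_measurable borel"
    using pmeas v0meas by simp_all
  define M where "M = 2 * (h 0)\<^sup>2 + 2 * Ch\<^sup>2 * set_lebesgue_integral lborel {0..1} (\<lambda>x. (v0 x)\<^sup>2)
      + (Cb * Ch)\<^sup>2 / \<delta>h * set_lebesgue_integral lborel (QT T) (\<lambda>z. (p z)\<^sup>2)"
  have "M \<ge> 0"
    unfolding M_def using hpos
    by (intro add_nonneg_nonneg mult_nonneg_nonneg) (auto simp: set_lebesgue_integral_def indicator_def)
  define C where "C = 1 + M + 2 / \<delta>h\<^sup>2 * (M + (h 0)\<^sup>2) + M / \<delta>h + Ch\<^sup>2 * (M / \<delta>h)"
  have C: "C > 0" "M \<le> C" "2 / \<delta>h\<^sup>2 * (M + (h 0)\<^sup>2) \<le> C" "M / \<delta>h \<le> C" "Ch\<^sup>2 * (M / \<delta>h) \<le> C"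
    unfolding C_def using \<open>M \<ge> 0\<close> hpos by (simp_all add: add_nonneg_nonneg add_pos_nonneg)
  show ?thesis
  proof (intro exI[of _ C] conjI allI impI \<open>C > 0\<close>, goal_cases)
    case (1 n \<delta> v v')
    then have "n \<ge> 1" and bounds: "\<And>t. t \<in> {0..T} \<Longrightarrow> grid_l2_sq n (\<lambda>i. v i t) \<le> C"
      "\<And>t. t \<in> {0..T} \<Longrightarrow> grid_l2_sq n (\<lambda>i. h (v i t)) \<le> C"
      "set_lebesgue_integral lborel {0..T} (\<lambda>t. grid_diff_l2_sq n (\<lambda>i. v i t)) \<le> C"
      "set_lebesgue_integral lborel {0..T} (\<lambda>t. grid_diff_l2_sq n (\<lambda>i. h (v i t))) \<le> C"
      using scheme_a_priori_bounds[OF h1 h'_cont hbd(1) hpos(1) b_bound p_meas pL2 v0_meas v0L2,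
          where \<delta> = \<delta> and n = n and v = v and v' = v', folded M_def] C T by force+
    then show ?case
      using set_integral_step_fun_sq[OF \<open>n \<ge> 1\<close>, of "\<lambda>x. x"] set_integral_step_fun_sq[OF \<open>n \<ge> 1\<close>, of h]
        set_integral_diffq_step_fun_sq[OF \<open>n \<ge> 1\<close>, of "\<lambda>x. x"] set_integral_diffq_step_fun_sq[OF \<open>n \<ge> 1\<close>, of h]
      by (simp add: Let_def)
  qed
qed

end
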